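(* Fix $k\ge 2$, $\epsilon>0$ and a graphlet $\mathsf{G}$ on $k$ vertices. For a graph $G$ on $n$ nodes, the number of pairs $(\mathcal{W},\mathcal{W}')\in\mathcal{D}\times\mathcal{D}$ such that $\mathrm{Cov}\big(\tilde W(\mathcal{W},\mathsf{G}),\tilde W(\mathcal{W}',\mathsf{G})\big)>0$ is $O(n^{2k-2})$ (with the implied constant depending only on $k$).
   Context: Let $G=(V,E)$ be a simple undirected graph with $V=\{v_1,\dots,v_n\}$, $a_{i,j}=1$ iff $\{v_i,v_j\}\in E$. A graphlet is a simple graph $\mathsf{G}=(\mathsf{V},\mathsf{E})$, $\mathsf{V}=\{u_1,\dots,u_k\}$. Independently for each ordered pair $(i,j)$, $i\ne j$, let $\tilde a_{i,j}$ be a bit with $\Pr[\tilde a_{i,j}=1]=e^{\epsilon}/(1+e^{\epsilon})$ if $a_{i,j}=1$ and $1/(1+e^{\epsilon})$ if $a_{i,j}=0$, and set $\hat a_{i,j}=\frac{e^{\epsilon}+1}{e^{\epsilon}-1}\tilde a_{i,j}-\frac{1}{e^{\epsilon}-1}$. $\mathcal{D}$ is the set of tuples $\mathcal{W}=(v_{\ell_1},\dots,v_{\ell_k})\in V^k$ of pairwise distinct nodes, and $\tilde W(\mathcal{W},\mathsf{G})=\prod_{\{u_i,u_j\}\in\mathsf{E},\,i<j}\hat a_{\ell_i,\ell_j}$. *)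

theory Defs
  imports "HOL-Probability.Probability"
begin

definition simple_graph_on :: "nat \<Rightarrow> (nat \<Rightarrow> nat \<Rightarrow> bool) \<Rightarrow> bool" where
  "simple_graph_on n a \<longleftrightarrow> (\<forall>i<n. \<forall>j<n. a i j = a j i) \<and> (\<forall>i<n. \<not> a i i)"

definition ord_pairs :: "nat \<Rightarrow> (nat \<times> nat) set" where
  "ord_pairs n = {(i,j). i < n \<and> j < n \<and> i \<noteq> j}"

text \<open>Randomized response: independent bits tilde-a_{i,j} for each ordered pair.\<close>
definition rr_pmf :: "real \<Rightarrow> nat \<Rightarrow> (nat \<Rightarrow> nat \<Rightarrow> bool) \<Rightarrow> (nat \<times> nat \<Rightarrow> bool) pmf" where
  "rr_pmf \<epsilon> n a = Pi_pmf (ord_pairs n) False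
     (\<lambda>(i,j). bernoulli_pmf (if a i j then exp \<epsilon> / (1 + exp \<epsilon>) else 1 / (1 + exp \<epsilon>)))"

text \<open>Unbiased estimator hat-a_{i,j} computed from the outcome \<omega>.\<close>
definition a_hat :: "real \<Rightarrow> (nat \<times> nat \<Rightarrow> bool) \<Rightarrow> nat \<Rightarrow> nat \<Rightarrow> real" where
  "a_hat \<epsilon> \<omega> i j = (exp \<epsilon> + 1) / (exp \<epsilon> - 1) * (if \<omega> (i,j) then 1 else 0) - 1 / (exp \<epsilon> - 1)"

text \<open>Tuples of k pairwise distinct nodes of G (W ! i = index of v_{l_{i+1}}).\<close>
definition tuples_D :: "nat \<Rightarrow> nat \<Rightarrow> nat list set" where
  "tuples_D n k = {W. length W = k \<and> distinct W \<and> set W \<subseteq> {..<n}}"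

text \<open>tilde-W(W, graphlet): product over graphlet edges {u_i,u_j}, i<j, of hat-a_{l_i,l_j}.
  The graphlet is a simple graph on {0..<k} with adjacency E.\<close>
definition W_tilde :: "real \<Rightarrow> (nat \<Rightarrow> nat \<Rightarrow> bool) \<Rightarrow> nat \<Rightarrow> nat list \<Rightarrow> (nat \<times> nat \<Rightarrow> bool) \<Rightarrow> real" where
  "W_tilde \<epsilon> E k W \<omega> = (\<Prod>(i,j)\<in>{(i,j). i < j \<and> j < k \<and> E i j}. a_hat \<epsilon> \<omega> (W ! i) (W ! j))"

definition cov_pmf :: "'a pmf \<Rightarrow> ('a \<Rightarrow> real) \<Rightarrow> ('a \<Rightarrow> real) \<Rightarrow> real" where
  "cov_pmf M X Y = measure_pmf.expectation M (\<lambda>\<omega>. X \<omega> * Y \<omega>)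
      - measure_pmf.expectation M X * measure_pmf.expectation M Y"

end

theory Submission
  imports Defs
begin

text \<open>The estimator \<open>W_tilde \<epsilon> E k W\<close> is a function of the randomized-response bits at the
  ordered pairs \<open>(W ! i, W ! j)\<close>, \<open>{u\<^sub>i, u\<^sub>j}\<close> an edge of the graphlet. The bits are
  independent, so two estimators are uncorrelated unless these sets of pairs meet, i.e. unless
  \<open>W' ! i' = W ! i\<close> and \<open>W' ! j' = W ! j\<close> for some positions with \<open>i' \<noteq> j'\<close>. For fixed positions
  there are at most \<open>n ^ k\<close> choices of \<open>W\<close> and then \<open>n ^ (k - 2)\<close> of \<open>W'\<close>, and there are at
  most \<open>k ^ 4\<close> choices of positions.\<close>

definition depends_only_on :: "(('a \<Rightarrow> 'b) \<Rightarrow> 'c) \<Rightarrow> 'a set \<Rightarrow> bool" where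
  "depends_only_on F S \<longleftrightarrow> (\<forall>\<omega> \<omega>'. (\<forall>x\<in>S. \<omega> x = \<omega>' x) \<longrightarrow> F \<omega> = F \<omega>')"

lemma depends_only_onD:
  "depends_only_on F S \<Longrightarrow> (\<And>x. x \<in> S \<Longrightarrow> \<omega> x = \<omega>' x) \<Longrightarrow> F \<omega> = F \<omega>'"
  unfolding depends_only_on_def by blast

lemma expectation_pair_pmf_mult:
  fixes f :: "'a \<Rightarrow> real" and g :: "'b \<Rightarrow> real"
  assumes "finite (set_pmf p)" "finite (set_pmf q)"
  shows "measure_pmf.expectation (pair_pmf p q) (\<lambda>z. f (fst z) * g (snd z))
     = measure_pmf.expectation p f * measure_pmf.expectation q g"
proof -
  have "measure_pmf.expectation (pair_pmf p q) (\<lambda>z. f (fst z) * g (snd z))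
      = (\<Sum>(a, b)\<in>set_pmf p \<times> set_pmf q. f a * g b * pmf (pair_pmf p q) (a, b))"
    by (subst integral_measure_pmf_real[where A = "set_pmf p \<times> set_pmf q"])
       (use assms in \<open>auto simp: case_prod_unfold\<close>)
  also have "\<dots> = (\<Sum>a\<in>set_pmf p. f a * pmf p a) * (\<Sum>b\<in>set_pmf q. g b * pmf q b)"
    by (simp add: sum.cartesian_product[symmetric] sum_product pmf_pair mult_ac)
  also have "\<dots> = measure_pmf.expectation p f * measure_pmf.expectation q g"
    using assms by (simp add: integral_measure_pmf_real)
  finally show ?thesis .
qed

lemma expectation_Pi_pmf_subset:
  fixes F :: "('a \<Rightarrow> 'b) \<Rightarrow> real"
  assumes "finite A" "B \<subseteq> A" "depends_only_on F B"
  shows "measure_pmf.expectation (Pi_pmf A dflt p) F = measure_pmf.expectation (Pi_pmf B dflt p) F"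
  unfolding Pi_pmf_subset[OF assms(1,2)] integral_map_pmf
  by (intro Bochner_Integration.integral_cong refl depends_only_onD[OF assms(3)]) simp

lemma expectation_Pi_pmf_mult_disjoint:
  fixes F G :: "('a \<Rightarrow> 'b) \<Rightarrow> real"
  assumes "finite A" "\<And>x. x \<in> A \<Longrightarrow> finite (set_pmf (p x))"
    and "S \<subseteq> A" "T \<subseteq> A" "S \<inter> T = {}"
    and F: "depends_only_on F S" and G: "depends_only_on G T"
  shows "measure_pmf.expectation (Pi_pmf A dflt p) (\<lambda>\<omega>. F \<omega> * G \<omega>)
    = measure_pmf.expectation (Pi_pmf A dflt p) F * measure_pmf.expectation (Pi_pmf A dflt p) G"
proof -
  have fin: "finite S" "finite T" using assms(1,3,4) finite_subset by auto
  have fin_set: "finite (set_pmf (Pi_pmf U dflt p))" if "U \<subseteq> A" for U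
    using that assms(1,2) finite_subset[OF that assms(1)]
    by (subst set_Pi_pmf) (auto intro!: finite_PiE_dflt)
  let ?merge = "\<lambda>(f, g) x. if x \<in> S then f x else g x"
  have "depends_only_on (\<lambda>\<omega>. F \<omega> * G \<omega>) (S \<union> T)"
    using F G unfolding depends_only_on_def by (metis UnCI)
  then have "measure_pmf.expectation (Pi_pmf A dflt p) (\<lambda>\<omega>. F \<omega> * G \<omega>)
      = measure_pmf.expectation (Pi_pmf (S \<union> T) dflt p) (\<lambda>\<omega>. F \<omega> * G \<omega>)"
    using assms by (intro expectation_Pi_pmf_subset) auto
  also have "\<dots> = measure_pmf.expectation (pair_pmf (Pi_pmf S dflt p) (Pi_pmf T dflt p))
       (\<lambda>z. F (?merge z) * G (?merge z))"
    by (simp add: Pi_pmf_union[OF fin assms(5)])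
  also have "\<dots> = measure_pmf.expectation (pair_pmf (Pi_pmf S dflt p) (Pi_pmf T dflt p))
       (\<lambda>z. F (fst z) * G (snd z))"
    using assms(5) by (intro Bochner_Integration.integral_cong refl arg_cong2[where f = times]
        depends_only_onD[OF F] depends_only_onD[OF G]) auto
  also have "\<dots> = measure_pmf.expectation (Pi_pmf S dflt p) F * measure_pmf.expectation (Pi_pmf T dflt p) G"
    using assms(3,4) by (intro expectation_pair_pmf_mult fin_set)
  also have "\<dots> = measure_pmf.expectation (Pi_pmf A dflt p) F * measure_pmf.expectation (Pi_pmf A dflt p) G"
    using assms by (simp add: expectation_Pi_pmf_subset)
  finally show ?thesis .
qed

lemma cov_pmf_Pi_pmf_disjoint_eq_0:
  fixes F G :: "('a \<Rightarrow> 'b) \<Rightarrow> real"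
  assumes "finite A" "\<And>x. x \<in> A \<Longrightarrow> finite (set_pmf (p x))"
    and "S \<subseteq> A" "T \<subseteq> A" "S \<inter> T = {}" "depends_only_on F S" "depends_only_on G T"
  shows "cov_pmf (Pi_pmf A dflt p) F G = 0"
  unfolding cov_pmf_def using expectation_Pi_pmf_mult_disjoint[OF assms] by simp

definition graphlet_edges :: "(nat \<Rightarrow> nat \<Rightarrow> bool) \<Rightarrow> nat \<Rightarrow> (nat \<times> nat) set" where
  "graphlet_edges E k = {(i, j). i < j \<and> j < k \<and> E i j}"

definition mapped_edges :: "(nat \<Rightarrow> nat \<Rightarrow> bool) \<Rightarrow> nat \<Rightarrow> nat list \<Rightarrow> (nat \<times> nat) set" where
  "mapped_edges E k W = (\<lambda>(i, j). (W ! i, W ! j)) ` graphlet_edges E k"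

lemma W_tilde_depends_only_on_mapped_edges:
  "depends_only_on (W_tilde \<epsilon> E k W) (mapped_edges E k W)"
  unfolding depends_only_on_def W_tilde_def mapped_edges_def graphlet_edges_def a_hat_def
  by (auto intro!: prod.cong)

lemma mapped_edges_subset_ord_pairs:
  assumes "W \<in> tuples_D n k"
  shows "mapped_edges E k W \<subseteq> ord_pairs n"
proof clarify
  fix x y assume "(x, y) \<in> mapped_edges E k W"
  then obtain i j where ij: "i < j" "j < k" and xy: "x = W ! i" "y = W ! j"
    unfolding mapped_edges_def graphlet_edges_def by auto
  have W: "length W = k" "distinct W" "set W \<subseteq> {..<n}"
    using assms unfolding tuples_D_def by auto
  then have "W ! i \<in> {..<n}" "W ! j \<in> {..<n}"
    using ij by (meson nth_mem order.strict_trans subsetD)+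
  moreover have "W ! i \<noteq> W ! j"
    using ij W by (simp add: nth_eq_iff_index_eq)
  ultimately show "(x, y) \<in> ord_pairs n"
    unfolding ord_pairs_def xy by simp
qed

lemma finite_ord_pairs: "finite (ord_pairs n)"
  by (rule finite_subset[of _ "{..<n} \<times> {..<n}"]) (auto simp: ord_pairs_def)

lemma cov_W_tilde_eq_0:
  assumes "W \<in> tuples_D n k" "W' \<in> tuples_D n k"
    and "mapped_edges E k W \<inter> mapped_edges E k W' = {}"
  shows "cov_pmf (rr_pmf \<epsilon> n a) (W_tilde \<epsilon> E k W) (W_tilde \<epsilon> E k W') = 0"
  unfolding rr_pmf_def
  by (rule cov_pmf_Pi_pmf_disjoint_eq_0[OF finite_ord_pairs _ mapped_edges_subset_ord_pairs
        mapped_edges_subset_ord_pairs assms(3) W_tilde_depends_only_on_mapped_edges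
        W_tilde_depends_only_on_mapped_edges])
     (simp_all add: assms)

definition shares_two_entries :: "nat \<Rightarrow> nat list \<Rightarrow> nat list \<Rightarrow> bool" where
  "shares_two_entries k W W' \<longleftrightarrow>
     (\<exists>i j i' j'. i < k \<and> j < k \<and> i' < k \<and> j' < k \<and> i' \<noteq> j' \<and> W' ! i' = W ! i \<and> W' ! j' = W ! j)"

lemma cov_W_tilde_pos_imp_shares_two_entries:
  assumes "W \<in> tuples_D n k" "W' \<in> tuples_D n k"
    and "cov_pmf (rr_pmf \<epsilon> n a) (W_tilde \<epsilon> E k W) (W_tilde \<epsilon> E k W') > 0"
  shows "shares_two_entries k W W'"
proof -
  have "mapped_edges E k W \<inter> mapped_edges E k W' \<noteq> {}"
    using cov_W_tilde_eq_0[OF assms(1,2)] assms(3) by force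
  then obtain i j i' j' where "i < j" "j < k" "i' < j'" "j' < k" "(W ! i, W ! j) = (W' ! i', W' ! j')"
    unfolding mapped_edges_def graphlet_edges_def by auto
  then show ?thesis
    unfolding shares_two_entries_def by (intro exI[of _ i] exI[of _ j] exI[of _ i'] exI[of _ j']) auto
qed

lemma card_lists_with_fixed_entries_le:
  assumes "P \<subseteq> {..<k}"
  shows "card {xs. set xs \<subseteq> {..<n} \<and> length xs = k \<and> (\<forall>p\<in>P. xs ! p = c p)} \<le> n ^ (k - card P)"
proof -
  let ?free = "{..<k} - P"
  let ?L = "{xs. set xs \<subseteq> {..<n} \<and> length xs = k \<and> (\<forall>p\<in>P. xs ! p = c p)}"
  have "inj_on (\<lambda>xs. restrict (nth xs) ?free) ?L"
  proof (rule inj_onI)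
    fix xs ys assume "xs \<in> ?L" "ys \<in> ?L" "restrict (nth xs) ?free = restrict (nth ys) ?free"
    then show "xs = ys"
      by (intro nth_equalityI) (auto simp: fun_eq_iff restrict_def split: if_splits)
  qed
  moreover have "(\<lambda>xs. restrict (nth xs) ?free) ` ?L \<subseteq> PiE ?free (\<lambda>_. {..<n})"
  proof (rule image_subsetI)
    fix xs assume "xs \<in> ?L"
    then have "xs ! p < n" if "p < k" for p
      using that nth_mem by blast
    then show "restrict (nth xs) ?free \<in> PiE ?free (\<lambda>_. {..<n})"
      by (simp add: restrict_PiE_iff)
  qed
  ultimately have "card ?L \<le> card (PiE ?free (\<lambda>_. {..<n}))"
    by (intro card_inj_on_le finite_PiE) auto
  also have "\<dots> = n ^ (k - card P)"
    using assms by (simp add: card_PiE card_Diff_subset finite_subset)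
  finally show ?thesis .
qed

lemma card_list_pairs_matching_at_le:
  assumes "i < k" "j < k" "i' < k" "j' < k" "i' \<noteq> j'"
  shows "card {(W, W'). set W \<subseteq> {..<n} \<and> length W = k \<and> set W' \<subseteq> {..<n} \<and> length W' = k
      \<and> W' ! i' = W ! i \<and> W' ! j' = W ! j} \<le> n ^ (2 * k - 2)"
proof -
  let ?L = "{W. set W \<subseteq> {..<n} \<and> length W = k}"
  let ?M = "\<lambda>W. {W'. set W' \<subseteq> {..<n} \<and> length W' = k \<and>
     (\<forall>p\<in>{i', j'}. W' ! p = (if p = i' then W ! i else W ! j))}"
  have "card {(W, W'). set W \<subseteq> {..<n} \<and> length W = k \<and> set W' \<subseteq> {..<n} \<and> length W' = k
      \<and> W' ! i' = W ! i \<and> W' ! j' = W ! j} = card (Sigma ?L ?M)"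
    using assms(5) by (intro arg_cong[where f = card]) auto
  also have "\<dots> = (\<Sum>W\<in>?L. card (?M W))"
    by (intro card_SigmaI) (auto intro: finite_subset[OF _ finite_lists_length_eq])
  also have "\<dots> \<le> (\<Sum>W\<in>?L. n ^ (k - 2))"
  proof (rule sum_mono)
    fix W
    have "card (?M W) \<le> n ^ (k - card {i', j'})"
      using assms by (intro card_lists_with_fixed_entries_le) auto
    then show "card (?M W) \<le> n ^ (k - 2)"
      using assms(5) by (simp add: numeral_2_eq_2)
  qed
  also have "\<dots> = n ^ k * n ^ (k - 2)"
    by (simp add: card_lists_length_eq)
  also have "\<dots> = n ^ (2 * k - 2)"
    using assms by (simp flip: power_add) (intro arg_cong[where f = "power n"], linarith)
  finally show ?thesis .
qed

lemma card_list_pairs_sharing_two_entries_le: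
  "card {(W, W'). set W \<subseteq> {..<n} \<and> length W = k \<and> set W' \<subseteq> {..<n} \<and> length W' = k \<and>
      shares_two_entries k W W'}
    \<le> k ^ 4 * n ^ (2 * k - 2)" (is "card ?T \<le> _")
proof -
  let ?Q = "{(i, j, i', j'). i < k \<and> j < k \<and> i' < k \<and> j' < k \<and> i' \<noteq> j'}"
  let ?P = "\<lambda>(i, j, i', j'). {(W, W'). set W \<subseteq> {..<n} \<and> length W = k \<and>
      set W' \<subseteq> {..<n} \<and> length W' = k \<and> W' ! i' = W ! i \<and> W' ! j' = W ! j}"
  have Q: "?Q \<subseteq> {..<k} \<times> {..<k} \<times> {..<k} \<times> {..<k}"
    by auto
  have "card ?T = card (\<Union>q\<in>?Q. ?P q)"
    unfolding shares_two_entries_def by (rule arg_cong[where f = card]) fast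
  also have "\<dots> \<le> (\<Sum>q\<in>?Q. card (?P q))"
    by (rule card_UN_le, rule finite_subset[OF Q]) simp
  also have "\<dots> \<le> (\<Sum>q\<in>?Q. n ^ (2 * k - 2))"
  proof (rule sum_mono)
    fix q assume "q \<in> ?Q"
    then obtain i j i' j' where "q = (i, j, i', j')" "i < k" "j < k" "i' < k" "j' < k" "i' \<noteq> j'"
      by blast
    then show "card (?P q) \<le> n ^ (2 * k - 2)"
      using card_list_pairs_matching_at_le[of i k j i' j' n] by simp
  qed
  also have "\<dots> = card ?Q * n ^ (2 * k - 2)"
    by simp
  also have "\<dots> \<le> k ^ 4 * n ^ (2 * k - 2)"
  proof (rule mult_right_mono)
    have "card ?Q \<le> card ({..<k} \<times> {..<k} \<times> {..<k} \<times> {..<k})"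
      by (rule card_mono[OF _ Q]) simp
    then show "card ?Q \<le> k ^ 4"
      by (simp add: card_cartesian_product power4_eq_xxxx)
  qed simp
  finally show ?thesis .
qed

theorem lemma3:
  fixes k :: nat
  assumes "k \<ge> 2"
  shows "\<exists>C::real. \<forall>\<epsilon>::real. \<forall>E n a. \<epsilon> > 0 \<longrightarrow> simple_graph_on k E \<longrightarrow> simple_graph_on n a \<longrightarrow>
     real (card {(W, W'). W \<in> tuples_D n k \<and> W' \<in> tuples_D n k \<and>
        cov_pmf (rr_pmf \<epsilon> n a) (W_tilde \<epsilon> E k W) (W_tilde \<epsilon> E k W') > 0})
     \<le> C * real n ^ (2 * k - 2)"
proof (intro exI[of _ "real k ^ 4"] allI impI)
  fix \<epsilon> :: real and E n a
  let ?S = "{(W, W'). W \<in> tuples_D n k \<and> W' \<in> tuples_D n k \<and>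
        cov_pmf (rr_pmf \<epsilon> n a) (W_tilde \<epsilon> E k W) (W_tilde \<epsilon> E k W') > 0}"
  let ?L = "{xs. set xs \<subseteq> {..<n} \<and> length xs = k}"
  let ?T = "{(W, W'). set W \<subseteq> {..<n} \<and> length W = k \<and> set W' \<subseteq> {..<n} \<and> length W' = k \<and>
      shares_two_entries k W W'}"
  have "?S \<subseteq> ?T"
    by (auto intro: cov_W_tilde_pos_imp_shares_two_entries simp: tuples_D_def)
  moreover have "finite ?T"
    by (rule finite_subset[of _ "?L \<times> ?L"]) (blast, simp add: finite_lists_length_eq)
  ultimately have "card ?S \<le> card ?T"
    by (rule card_mono[rotated])
  also have "\<dots> \<le> k ^ 4 * n ^ (2 * k - 2)"
    by (rule card_list_pairs_sharing_two_entries_le)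
  finally have "real (card ?S) \<le> real (k ^ 4 * n ^ (2 * k - 2))"
    by (rule of_nat_mono)
  then show "real (card ?S) \<le> real k ^ 4 * real n ^ (2 * k - 2)"
    by simp
qed

end
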